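(* Let $\gamma_k>0$, let $y(t)$ solve $\dot y_k=\gamma_kv_k(Q(y))$, $k\in\mathcal{N}$, and let $x(t)=Q(y(t))$. Let $x^*=(\alpha_1^*,\dots,\alpha_N^* )$ be a strict Nash equilibrium and assume each penalty function is decomposable, $h_k(x_k)=\sum_{\beta\in\mathcal{A}_k}\theta_k(x_{k\beta})$. Then for every $\varepsilon>0$ and all $x(0)$ sufficiently close to $x^*$, $$1-x_{k\alpha_k^*}(t)\le\sum_{\mu\in\mathcal{A}_k\setminus\{\alpha_k^*\}}\phi_k\big(c_{k\mu}-(1-\varepsilon)\gamma_k\delta_{k\mu}t\big)\quad\text{for all }t\ge0,$$ where $c_{k\mu}$ are constants depending only on the initial conditions, $\delta_{k\mu}=v_{k\alpha_k^*}(x^* )-v_{k\mu}(x^* )$, and $\phi_k(z)=0$ if $z\le\theta_k'(0^+)$, $\phi_k(z)=1$ if $z\ge\theta_k'(1^-)$, $\phi_k(z)=(\theta_k')^{-1}(z)$ otherwise. In particular, if $\theta_k'(0)$ is finite, convergence occurs in finite time.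
   Context: Setting: finite game with players $\mathcal{N}$, action sets $\mathcal{A}_k$, mixed strategies $\mathcal{X}_k=\Delta(\mathcal{A}_k)$, $\mathcal{X}=\prod_k\mathcal{X}_k$, multilinear expected payoffs $u_k$, payoff vectors $v_k(x)=(u_k(\alpha;x_{-k}))_{\alpha\in\mathcal{A}_k}$. Kernels $\theta_k:[0,1]\to\mathbb{R}$ are continuous, strongly convex and smooth on $(0,1]$; the choice map is $Q_k(y_k)=\arg\max_{x_k\in\mathcal{X}_k}\{\langle y_k,x_k\rangle-h_k(x_k)\}$, $Q=(Q_k)_k$. A strict Nash equilibrium $x^*$ satisfies $u_k(x^* )>u_k(x_k;x^*_{-k})$ for all $x_k\ne x_k^*$; it is a pure profile, identified with actions $\alpha_k^*$. *)

theory Defs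
  imports "HOL-Analysis.Analysis" "HOL-Library.FuncSet"
begin

text \<open>Finite game: players are the elements of a finite type 'n, the action set of
player k is the finite nonempty set A k of elements of type 'a.  Mixed strategies of
player k are functions 'a => real that vanish outside A k and form a probability vector
on A k.\<close>

definition mixed_simplex :: "'a set \<Rightarrow> ('a \<Rightarrow> real) set" where
  "mixed_simplex S = {p. (\<forall>b\<in>S. 0 \<le> p b) \<and> (\<forall>b. b \<notin> S \<longrightarrow> p b = 0) \<and> sum p S = 1}"

definition strategies :: "('n \<Rightarrow> 'a set) \<Rightarrow> ('n \<Rightarrow> 'a \<Rightarrow> real) set" where
  "strategies A = {x. \<forall>k. x k \<in> mixed_simplex (A k)}"

definition pure :: "'a \<Rightarrow> 'a \<Rightarrow> real" where
  "pure \<alpha> = (\<lambda>\<beta>. if \<beta> = \<alpha> then 1 else 0)"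

definition payoff ::
  "('n::finite \<Rightarrow> 'a set) \<Rightarrow> ('n \<Rightarrow> ('n \<Rightarrow> 'a) \<Rightarrow> real) \<Rightarrow> 'n \<Rightarrow> ('n \<Rightarrow> 'a \<Rightarrow> real) \<Rightarrow> real" where
  "payoff A U k x = (\<Sum>a\<in>Pi\<^sub>E UNIV A. (\<Prod>j\<in>UNIV. x j (a j)) * U k a)"

definition payv ::
  "('n::finite \<Rightarrow> 'a set) \<Rightarrow> ('n \<Rightarrow> ('n \<Rightarrow> 'a) \<Rightarrow> real) \<Rightarrow> 'n \<Rightarrow> ('n \<Rightarrow> 'a \<Rightarrow> real) \<Rightarrow> 'a \<Rightarrow> real" where
  "payv A U k x \<alpha> = payoff A U k (x(k := pure \<alpha>))"

definition strict_nash ::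
  "('n::finite \<Rightarrow> 'a set) \<Rightarrow> ('n \<Rightarrow> ('n \<Rightarrow> 'a) \<Rightarrow> real) \<Rightarrow> ('n \<Rightarrow> 'a \<Rightarrow> real) \<Rightarrow> bool" where
  "strict_nash A U xs \<longleftrightarrow> xs \<in> strategies A \<and>
     (\<forall>k. \<forall>z\<in>mixed_simplex (A k). z \<noteq> xs k \<longrightarrow> payoff A U k xs > payoff A U k (xs(k := z)))"

definition choice ::
  "('n \<Rightarrow> 'a set) \<Rightarrow> ('n \<Rightarrow> ('a \<Rightarrow> real) \<Rightarrow> real) \<Rightarrow> ('n \<Rightarrow> 'a \<Rightarrow> real) \<Rightarrow> ('n \<Rightarrow> 'a \<Rightarrow> real)" where
  "choice A h y = (\<lambda>k. THE p. p \<in> mixed_simplex (A k) \<and>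
      (\<forall>z\<in>mixed_simplex (A k). (\<Sum>b\<in>A k. y k b * z b) - h k z \<le> (\<Sum>b\<in>A k. y k b * p b) - h k p))"

definition strongly_convex_on_real :: "real set \<Rightarrow> (real \<Rightarrow> real) \<Rightarrow> bool" where
  "strongly_convex_on_real S f \<longleftrightarrow> (\<exists>K>0. \<forall>x\<in>S. \<forall>y\<in>S. \<forall>t\<in>{0..1}.
      f (t * x + (1 - t) * y) \<le> t * f x + (1 - t) * f y - K / 2 * t * (1 - t) * (x - y)^2)"

text \<open>One-sided limits theta'(0^+) and theta'(1^-) of the (increasing) derivative,
as extended reals (theta'(0^+) may be -infinity).\<close>
definition dlim0 :: "(real \<Rightarrow> real) \<Rightarrow> ereal" where
  "dlim0 d = Lim (at_right 0) (\<lambda>x. ereal (d x))"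

definition dlim1 :: "(real \<Rightarrow> real) \<Rightarrow> ereal" where
  "dlim1 d = Lim (at_left 1) (\<lambda>x. ereal (d x))"

definition phi :: "(real \<Rightarrow> real) \<Rightarrow> real \<Rightarrow> real" where
  "phi d z = (if ereal z \<le> dlim0 d then 0
              else if dlim1 d \<le> ereal z then 1
              else (THE s. s \<in> {0<..<1} \<and> d s = z))"

end

theory Submission
  imports Defs
begin

text \<open>
  With a decomposable penalty the choice map maximises the sum over actions b of
  y b * x b - theta (x b) on the simplex.  Moving a little mass from one action to another
  cannot help, which yields first-order bounds on score differences in terms of theta'.
  Two consequences drive the proof: the weight of the equilibrium action can only grow when
  all score gaps y mu - y alpha shrink, and the weight of mu is at most
  phi (y mu - y alpha + theta' 1).  Near a strict equilibrium each payoff difference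
  v mu - v alpha stays below -(1 - eps) delta mu, so as long as the choice stays near the
  equilibrium the score gaps fall at least linearly in t; a first-exit argument shows that the
  choice indeed never leaves that neighbourhood.  Feeding the linear decay into the phi-bound
  gives the estimate, and if theta'(0+) is finite, phi vanishes on all sufficiently negative
  arguments, so the equilibrium is reached in finite time.
\<close>

section \<open>Kernels\<close>

lemma nonpos_at_left_endpoint:
  fixes g :: "real \<Rightarrow> real"
  assumes "a < b" "continuous_on {a..b} g" "\<And>x. x \<in> {a<..b} \<Longrightarrow> g x \<le> 0"
  shows "g a \<le> 0"
proof -
  have "(g \<longlongrightarrow> g a) (at a within {a..b})"
    using assms(1,2) by (simp add: continuous_on_def)
  then have "(g \<longlongrightarrow> g a) (at_right a)"
    using assms(1) at_within_Icc_at_right[of a b] by simp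
  moreover have "eventually (\<lambda>x. x \<in> {a<..<b}) (at_right a)"
    using assms(1) by (rule eventually_at_right_real)
  then have "eventually (\<lambda>x. g x \<le> 0) (at_right a)"
    by eventually_elim (auto intro: assms(3))
  ultimately show ?thesis by (rule tendsto_upperbound) simp
qed

locale kernel =
  fixes f f' :: "real \<Rightarrow> real"
  assumes continuous: "continuous_on {0..1} f"
    and strongly_convex: "strongly_convex_on_real {0<..1} f"
    and has_deriv: "\<And>s. s \<in> {0<..1} \<Longrightarrow> (f has_real_derivative f' s) (at s within {0<..1})"
    and deriv_continuous: "continuous_on {0<..1} f'"
begin

lemma convex_on_half_open: "convex_on {0<..1} f"
proof (rule convex_onI)
  fix t x y :: real assume t: "0 < t" "t < 1" and xy: "x \<in> {0<..1}" "y \<in> {0<..1}"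
  obtain K where "K > 0" and K: "\<forall>x\<in>{0<..1}. \<forall>y\<in>{0<..1}. \<forall>t\<in>{0..1}.
      f (t * x + (1 - t) * y) \<le> t * f x + (1 - t) * f y - K / 2 * t * (1 - t) * (x - y)^2"
    using strongly_convex unfolding strongly_convex_on_real_def by blast
  moreover have "0 \<le> K / 2 * (1 - t) * (1 - (1 - t)) * (x - y)^2"
    using \<open>K > 0\<close> t by simp
  moreover have "f ((1 - t) * x + (1 - (1 - t)) * y)
      \<le> (1 - t) * f x + (1 - (1 - t)) * f y - K / 2 * (1 - t) * (1 - (1 - t)) * (x - y)^2"
    using K[rule_format, of x y "1 - t"] t xy by simp
  ultimately have "f ((1 - t) * x + (1 - (1 - t)) * y) \<le> (1 - t) * f x + (1 - (1 - t)) * f y"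
    by linarith
  then show "f ((1 - t) *\<^sub>R x + t *\<^sub>R y) \<le> (1 - t) * f x + t * f y" by simp
qed simp

lemma convex: "convex_on {0..1} f"
proof (rule convex_on_linorderI)
  fix t x y :: real assume t: "0 < t" "t < 1" and x: "x \<in> {0..1}" and y: "y \<in> {0..1}" and "x < y"
  then have y': "y \<in> {0<..1}" by auto
  let ?g = "\<lambda>x. f ((1 - t) * x + t * y) - ((1 - t) * f x + t * f y)"
  have g_nonpos: "?g x' \<le> 0" if "x' \<in> {0<..1}" for x'
    using convex_onD[OF convex_on_half_open, of t x' y] t that y' by simp
  have "?g x \<le> 0"
  proof (cases "x = 0")
    case True
    have "continuous_on {0..1} (\<lambda>x. f ((1 - t) * x + t * y))"
    proof (rule continuous_on_compose2[OF continuous])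
      have "(1 - t) * x' + t * y \<le> (1 - t) * 1 + t * 1" if "x' \<in> {0..1}" for x'
        using t y that by (intro add_mono mult_left_mono) auto
      then show "(\<lambda>x. (1 - t) * x + t * y) ` {0..1} \<subseteq> {0..1}"
        using t y by auto
    qed (intro continuous_intros)
    then have "continuous_on {0..1} ?g" by (intro continuous_intros continuous)
    then show ?thesis using True g_nonpos nonpos_at_left_endpoint[of 0 1 ?g] by simp
  qed (use g_nonpos x in auto)
  then show "f ((1 - t) *\<^sub>R x + t *\<^sub>R y) \<le> (1 - t) * f x + t * f y" by simp
qed simp

lemma above_tangent:
  assumes "c \<in> {0<..<1}" "x \<in> {0..1}"
  shows "f' c * (x - c) \<le> f x - f c"
proof -
  have "(f has_real_derivative f' c) (at c within {0<..<1})"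
    using has_deriv[of c] assms(1) by (auto intro: has_field_derivative_subset)
  then have "(f has_real_derivative f' c) (at c within {0..1})"
    using assms(1) at_within_open[of c "{0<..<1}"] by (auto intro: has_field_derivative_at_within)
  then show ?thesis
    using convex_on_imp_above_tangent[OF convex] assms by auto
qed

lemma strictly_above_tangent:
  assumes c: "c \<in> {0<..<1}" and x: "x \<in> {0..1}" and "x \<noteq> c"
  shows "f' c * (x - c) < f x - f c"
proof -
  \<comment> \<open>Strong convexity on the segment from c to its midpoint m with x; convexity then carries
    the strict gap out to x.\<close>
  obtain K where "K > 0" and K: "\<forall>x\<in>{0<..1}. \<forall>y\<in>{0<..1}. \<forall>t\<in>{0..1}.
      f (t * x + (1 - t) * y) \<le> t * f x + (1 - t) * f y - K / 2 * t * (1 - t) * (x - y)^2"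
    using strongly_convex unfolding strongly_convex_on_real_def by blast
  define m where "m = (c + x) / 2"
  define d where "d = (c + m) / 2"
  have m: "m \<in> {0<..1}" and "c \<noteq> m" using assms by (auto simp: m_def)
  then have "0 < K / 2 * (1 / 2) * (1 - 1 / 2) * (c - m)^2" using \<open>K > 0\<close> by simp
  moreover have "f (1 / 2 * c + (1 - 1 / 2) * m)
      \<le> 1 / 2 * f c + (1 - 1 / 2) * f m - K / 2 * (1 / 2) * (1 - 1 / 2) * (c - m)^2"
    using K c m by (intro K[rule_format]) auto
  moreover have "1 / 2 * c + (1 - 1 / 2) * m = d" by (simp add: d_def)
  ultimately have fd: "f d < (f c + f m) / 2" by simp
  have "f ((1 - 1 / 2) *\<^sub>R c + (1 / 2) *\<^sub>R x) \<le> (1 - 1 / 2) * f c + 1 / 2 * f x"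
    using c x by (intro convex_onD[OF convex]) auto
  then have fm: "f m \<le> (f c + f x) / 2" by (simp add: m_def field_simps)
  have "f' c * (d - c) \<le> f d - f c"
    using c m by (intro above_tangent) (auto simp: d_def)
  moreover have "f' c * (d - c) = f' c * (x - c) / 4" by (simp add: d_def m_def field_simps)
  ultimately show ?thesis using fd fm by (simp add: field_simps)
qed

lemma midpoint_less:
  assumes "a \<in> {0..1}" "c \<in> {0..1}" "a \<noteq> c"
  shows "f ((a + c) / 2) < (f a + f c) / 2"
proof -
  define m where "m = (a + c) / 2"
  have "m \<in> {0<..<1}" using assms by (auto simp: m_def)
  then have "f' m * (a - m) < f a - f m" "f' m * (c - m) < f c - f m"
    using assms by (auto intro!: strictly_above_tangent simp: m_def)
  moreover have "f' m * (a - m) + f' m * (c - m) = 0" by (simp add: m_def algebra_simps)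
  ultimately show ?thesis by (simp add: m_def[symmetric] field_simps)
qed

lemma midpoint_le:
  assumes "a \<in> {0..1}" "c \<in> {0..1}"
  shows "f ((a + c) / 2) \<le> (f a + f c) / 2"
  using midpoint_less[OF assms] by (cases "a = c") auto

lemma deriv_less_interior:
  assumes "a \<in> {0<..<1}" "b \<in> {0<..<1}" "a < b"
  shows "f' a < f' b"
proof -
  have "f' a * (b - a) < f b - f a" "f' b * (a - b) < f a - f b"
    using assms by (auto intro!: strictly_above_tangent)
  then have "0 < (f' b - f' a) * (b - a)" by (simp add: algebra_simps)
  then show ?thesis using assms by (simp add: zero_less_mult_iff)
qed

lemma deriv_le_one:
  assumes "a \<in> {0<..<1}"
  shows "f' a \<le> f' 1"
proof -
  have "(f' \<longlongrightarrow> f' 1) (at 1 within {0<..1})"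
    using deriv_continuous by (simp add: continuous_on_def)
  then have "(f' \<longlongrightarrow> f' 1) (at 1 within {a..1})"
    by (rule tendsto_within_subset) (use assms in auto)
  then have "(f' \<longlongrightarrow> f' 1) (at_left 1)"
    using assms at_within_Icc_at_left[of a 1] by simp
  moreover have "eventually (\<lambda>x. x \<in> {a<..<1}) (at_left (1::real))"
    using assms by (intro eventually_at_left_real) simp
  then have "eventually (\<lambda>x. f' a \<le> f' x) (at_left 1)"
    by eventually_elim (use assms deriv_less_interior in \<open>auto intro: less_imp_le\<close>)
  ultimately show ?thesis by (rule tendsto_lowerbound) simp
qed

lemma deriv_strict_mono:
  assumes "a \<in> {0<..1}" "b \<in> {0<..1}" "a < b"
  shows "f' a < f' b"
proof (cases "b = 1")
  case True
  have "f' a < f' ((a + 1) / 2)"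
    using assms True by (intro deriv_less_interior) auto
  also have "\<dots> \<le> f' 1"
    using assms True by (intro deriv_le_one) auto
  finally show ?thesis using True by simp
qed (use assms deriv_less_interior in auto)

lemma deriv_mono:
  assumes "a \<in> {0<..1}" "b \<in> {0<..1}" "a \<le> b"
  shows "f' a \<le> f' b"
  using deriv_strict_mono[OF assms(1,2)] assms(3) by (cases "a = b") auto

lemma dlim0_eq_INF: "dlim0 f' = (INF r\<in>{0<..1}. ereal (f' r))" (is "_ = ?L")
proof -
  have "((\<lambda>x. ereal (f' x)) \<longlongrightarrow> ?L) (at_right 0)"
  proof (rule order_tendstoI)
    fix a assume "a < ?L"
    have "eventually (\<lambda>x. x \<in> {0<..<1}) (at_right (0::real))"
      by (intro eventually_at_right_real) simp
    then show "eventually (\<lambda>x. a < ereal (f' x)) (at_right 0)"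
    proof eventually_elim
      case (elim x)
      then have "?L \<le> ereal (f' x)" by (intro INF_lower) auto
      then show ?case using \<open>a < ?L\<close> by simp
    qed
  next
    fix a assume "?L < a"
    then obtain r where r: "r \<in> {0<..1}" "ereal (f' r) < a" by (auto simp: INF_less_iff)
    have "eventually (\<lambda>x. x \<in> {0<..<r}) (at_right (0::real))"
      using r by (intro eventually_at_right_real) simp
    then show "eventually (\<lambda>x. ereal (f' x) < a) (at_right 0)"
    proof eventually_elim
      case (elim x)
      then have "f' x \<le> f' r" using r by (intro deriv_mono) auto
      then show ?case using r(2) by (meson ereal_less_eq(3) order_le_less_trans)
    qed
  qed
  then show ?thesis unfolding dlim0_def by (rule tendsto_Lim[OF trivial_limit_at_right_real])
qed

lemma dlim1_eq: "dlim1 f' = ereal (f' 1)"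
proof -
  have "(f' \<longlongrightarrow> f' 1) (at 1 within {0<..1})"
    using deriv_continuous by (simp add: continuous_on_def)
  then have "(f' \<longlongrightarrow> f' 1) (at 1 within {1/2..1})"
    by (rule tendsto_within_subset) auto
  then have "(f' \<longlongrightarrow> f' 1) (at_left 1)" using at_within_Icc_at_left[of "1/2" "1::real"] by simp
  then have "((\<lambda>x. ereal (f' x)) \<longlongrightarrow> ereal (f' 1)) (at_left 1)" by simp
  then show ?thesis unfolding dlim1_def by (rule tendsto_Lim[OF trivial_limit_at_left_real])
qed

lemma phi_inverse:
  assumes "dlim0 f' < ereal z" "ereal z < dlim1 f'"
  shows "phi f' z \<in> {0<..<1}" "f' (phi f' z) = z"
proof -
  obtain r where r: "r \<in> {0<..1}" "f' r < z"
    using assms(1) unfolding dlim0_eq_INF by (auto simp: INF_less_iff)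
  have "z < f' 1" using assms(2) dlim1_eq by simp
  moreover have "continuous_on {r..1} f'"
    using r by (intro continuous_on_subset[OF deriv_continuous]) auto
  ultimately obtain s where s: "r \<le> s" "s \<le> 1" "f' s = z"
    using IVT'[of f' r z 1] r by auto
  then have s01: "s \<in> {0<..<1}" using r \<open>z < f' 1\<close> by (cases "s = 1") auto
  have "\<exists>!s. s \<in> {0<..<1} \<and> f' s = z"
  proof (rule ex1I[of _ s])
    fix t assume t: "t \<in> {0<..<1} \<and> f' t = z"
    show "t = s"
    proof (rule ccontr)
      assume "t \<noteq> s"
      then have "f' t < f' s \<or> f' s < f' t"
        using t s01 by (auto simp: neq_iff intro: deriv_strict_mono)
      then show False using t s by simp
    qed
  qed (use s s01 in auto)
  then have "(THE s. s \<in> {0<..<1} \<and> f' s = z) \<in> {0<..<1} \<and> f' (THE s. s \<in> {0<..<1} \<and> f' s = z) = z"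
    by (rule theI')
  moreover have "phi f' z = (THE s. s \<in> {0<..<1} \<and> f' s = z)"
    using assms by (simp add: phi_def not_le)
  ultimately show "phi f' z \<in> {0<..<1}" "f' (phi f' z) = z" by simp_all
qed

lemma phi_nonneg: "0 \<le> phi f' z"
proof (cases "ereal z \<le> dlim0 f' \<or> dlim1 f' \<le> ereal z")
  case False
  then have "phi f' z \<in> {0<..<1}" by (intro phi_inverse) (auto simp: not_le)
  then show ?thesis by simp
qed (auto simp: phi_def)

lemma le_phi:
  assumes q: "q \<in> {0<..<1}" and below: "\<And>r. r \<in> {0<..<q} \<Longrightarrow> f' r \<le> z"
  shows "q \<le> phi f' z"
proof (cases "ereal z \<le> dlim0 f'")
  case True
  have "dlim0 f' \<le> ereal (f' (q / 4))" unfolding dlim0_eq_INF using q by (intro INF_lower) auto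
  with True have "ereal z \<le> ereal (f' (q / 4))" by (rule order_trans)
  then have "z \<le> f' (q / 4)" by simp
  moreover have "f' (q / 4) < f' (q / 2)" using q by (intro deriv_strict_mono) auto
  moreover have "f' (q / 2) \<le> z" using q by (intro below) auto
  ultimately show ?thesis by simp
next
  case False
  show ?thesis
  proof (cases "dlim1 f' \<le> ereal z")
    case True
    then show ?thesis using q False by (simp add: phi_def)
  next
    case False
    then have s: "phi f' z \<in> {0<..<1}" "f' (phi f' z) = z"
      using \<open>\<not> ereal z \<le> dlim0 f'\<close> phi_inverse by (auto simp: not_le)
    show ?thesis
    proof (rule ccontr)
      assume "\<not> q \<le> phi f' z"
      then have "f' (phi f' z) < f' ((phi f' z + q) / 2)"
        using s q by (intro deriv_strict_mono) auto
      moreover have "f' ((phi f' z + q) / 2) \<le> z"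
        using s q \<open>\<not> q \<le> phi f' z\<close> by (intro below) auto
      ultimately show False using s by simp
    qed
  qed
qed

lemma phi_eventually_zero:
  assumes "dlim0 f' \<noteq> -\<infinity>" "r > 0"
  shows "eventually (\<lambda>t. phi f' (c - r * t) = 0) at_top"
proof (cases "dlim0 f'")
  case (real z0)
  have "eventually (\<lambda>t. (c - z0) / r \<le> t) at_top" by (rule eventually_ge_at_top)
  then show ?thesis
  proof eventually_elim
    case (elim t)
    then have "c - r * t \<le> z0" using assms(2) by (simp add: divide_le_eq algebra_simps)
    then show ?case using real by (simp add: phi_def)
  qed
qed (use assms in \<open>auto simp: phi_def\<close>)

end

section \<open>Regularized choice on the simplex\<close>

lemma mixed_simplex_bounds:
  assumes "p \<in> mixed_simplex A" "finite A" "b \<in> A"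
  shows "0 \<le> p b" "p b \<le> 1"
proof -
  have "p b \<le> sum p A" using assms by (intro member_le_sum) (auto simp: mixed_simplex_def)
  then show "0 \<le> p b" "p b \<le> 1" using assms by (auto simp: mixed_simplex_def)
qed

lemma mixed_simplex_outside: "p \<in> mixed_simplex A \<Longrightarrow> b \<notin> A \<Longrightarrow> p b = 0"
  by (simp add: mixed_simplex_def)

lemma mixed_simplex_le_one_minus:
  assumes "p \<in> mixed_simplex A" "finite A" "\<alpha> \<in> A" "b \<in> A - {\<alpha>}"
  shows "p b \<le> 1 - p \<alpha>"
proof -
  have "p b \<le> sum p (A - {\<alpha>})"
    using assms by (intro member_le_sum) (auto simp: mixed_simplex_def)
  then show ?thesis using assms by (simp add: mixed_simplex_def sum.remove)
qed

lemma mixed_simplex_eq_pure: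
  assumes p: "p \<in> mixed_simplex A" and "finite A" "\<alpha> \<in> A" "1 \<le> p \<alpha>"
  shows "p = pure \<alpha>"
proof
  fix b
  consider "b = \<alpha>" | "b \<in> A - {\<alpha>}" | "b \<notin> A" by blast
  then show "p b = pure \<alpha> b"
  proof cases
    case 1
    then show ?thesis using assms mixed_simplex_bounds(2)[OF p \<open>finite A\<close> \<open>\<alpha> \<in> A\<close>]
      by (simp add: pure_def)
  next
    case 2
    then show ?thesis
      using assms mixed_simplex_le_one_minus[OF assms(1-3) 2] mixed_simplex_bounds(1)[OF p, of b]
      by (simp add: pure_def)
  next
    case 3
    then show ?thesis using p assms(3) mixed_simplex_outside by (auto simp: pure_def)
  qed
qed

lemma pure_in_mixed_simplex: "\<alpha> \<in> A \<Longrightarrow> finite A \<Longrightarrow> pure \<alpha> \<in> mixed_simplex A"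
  by (auto simp: mixed_simplex_def pure_def)

lemma compact_mixed_simplex:
  assumes "finite A"
  shows "compact (mixed_simplex A)"
proof -
  define B where "B b = (if b \<in> A then {0..1::real} else {0})" for b
  have "compact (PiE UNIV B)"
    using compactin_PiE[of "\<lambda>_. euclidean" UNIV B] by (simp add: B_def euclidean_product_topology)
  moreover have "closed {p::'a \<Rightarrow> real. sum p A = 1}"
    by (intro closed_Collect_eq continuous_intros continuous_on_product_coordinates)
  moreover have "mixed_simplex A = PiE UNIV B \<inter> {p. sum p A = 1}"
  proof (intro equalityI subsetI)
    fix p assume p: "p \<in> mixed_simplex A"
    then show "p \<in> PiE UNIV B \<inter> {p. sum p A = 1}"
      using mixed_simplex_bounds[OF p assms] by (auto simp: B_def mixed_simplex_def)
  qed (auto simp: B_def mixed_simplex_def PiE_iff split: if_splits)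
  ultimately show ?thesis by auto
qed

lemma sum_split_pair:
  assumes "finite A" "\<beta> \<in> A" "\<gamma> \<in> A" "\<beta> \<noteq> \<gamma>"
  shows "sum g A = g \<beta> + g \<gamma> + sum g (A - {\<beta>, \<gamma>})"
proof -
  have "sum g A = g \<beta> + (g \<gamma> + sum g (A - {\<beta>} - {\<gamma>}))"
    using assms by (simp add: sum.remove[of A \<beta>] sum.remove[of "A - {\<beta>}" \<gamma>])
  also have "A - {\<beta>} - {\<gamma>} = A - {\<beta>, \<gamma>}" by auto
  finally show ?thesis by (simp add: add.assoc)
qed

definition regularized_payoff :: "'a set \<Rightarrow> (real \<Rightarrow> real) \<Rightarrow> ('a \<Rightarrow> real) \<Rightarrow> ('a \<Rightarrow> real) \<Rightarrow> real"
  where "regularized_payoff A f y p = (\<Sum>b\<in>A. y b * p b) - (\<Sum>b\<in>A. f (p b))"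

definition is_regularized_choice :: "'a set \<Rightarrow> (real \<Rightarrow> real) \<Rightarrow> ('a \<Rightarrow> real) \<Rightarrow> ('a \<Rightarrow> real) \<Rightarrow> bool"
  where "is_regularized_choice A f y p \<longleftrightarrow> p \<in> mixed_simplex A \<and>
    (\<forall>q\<in>mixed_simplex A. regularized_payoff A f y q \<le> regularized_payoff A f y p)"

context kernel
begin

lemma regularized_choice_exists:
  assumes "finite A" "A \<noteq> {}"
  shows "\<exists>p. is_regularized_choice A f y p"
proof -
  obtain \<alpha> where "\<alpha> \<in> A" using assms(2) by blast
  then have "pure \<alpha> \<in> mixed_simplex A" using assms(1) by (rule pure_in_mixed_simplex)
  then have ne: "mixed_simplex A \<noteq> {}" by blast
  have coord: "continuous_on (mixed_simplex A) (\<lambda>p. p b)" for b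
    by (rule continuous_on_subset[OF continuous_on_product_coordinates]) simp
  have "continuous_on (mixed_simplex A) (\<lambda>p. f (p b))" if "b \<in> A" for b
  proof (rule continuous_on_compose2[OF continuous coord])
    show "(\<lambda>p. p b) ` mixed_simplex A \<subseteq> {0..1}"
    proof
      fix r assume "r \<in> (\<lambda>p. p b) ` mixed_simplex A"
      then obtain p where "p \<in> mixed_simplex A" "r = p b" by blast
      then show "r \<in> {0..1}" using mixed_simplex_bounds[of p A b] assms that by simp
    qed
  qed
  then have "continuous_on (mixed_simplex A) (regularized_payoff A f y)"
    unfolding regularized_payoff_def by (intro continuous_intros coord) auto
  then obtain p where "p \<in> mixed_simplex A"
      "\<forall>q\<in>mixed_simplex A. regularized_payoff A f y q \<le> regularized_payoff A f y p"
    using continuous_attains_sup[OF compact_mixed_simplex[OF assms(1)] ne] by blast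
  then show ?thesis unfolding is_regularized_choice_def by blast
qed

lemma regularized_choice_unique:
  assumes A: "finite A" and p: "is_regularized_choice A f y p" and q: "is_regularized_choice A f y q"
  shows "p = q"
proof (rule ccontr)
  \<comment> \<open>The midpoint of two distinct maximisers would do strictly better, by strict convexity of f.\<close>
  assume "p \<noteq> q"
  have ps: "p \<in> mixed_simplex A" and qs: "q \<in> mixed_simplex A"
    using p q by (auto simp: is_regularized_choice_def)
  from \<open>p \<noteq> q\<close> obtain b0 where b0: "p b0 \<noteq> q b0" by auto
  then have "b0 \<in> A" using ps qs mixed_simplex_outside by metis
  define m where "m b = (p b + q b) / 2" for b
  have ms: "m \<in> mixed_simplex A" using ps qs
    by (auto simp: mixed_simplex_def m_def sum.distrib simp flip: sum_divide_distrib)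
  have lin: "(\<Sum>b\<in>A. y b * m b) = ((\<Sum>b\<in>A. y b * p b) + (\<Sum>b\<in>A. y b * q b)) / 2"
    by (simp add: m_def algebra_simps sum.distrib flip: sum_divide_distrib)
  have "(\<Sum>b\<in>A. f (m b)) < (\<Sum>b\<in>A. (f (p b) + f (q b)) / 2)"
  proof (rule sum_strict_mono_ex1[OF A])
    show "\<forall>b\<in>A. f (m b) \<le> (f (p b) + f (q b)) / 2"
      using mixed_simplex_bounds[OF ps A] mixed_simplex_bounds[OF qs A]
      unfolding m_def by (intro ballI midpoint_le) auto
    show "\<exists>b\<in>A. f (m b) < (f (p b) + f (q b)) / 2"
      using mixed_simplex_bounds[OF ps A \<open>b0 \<in> A\<close>] mixed_simplex_bounds[OF qs A \<open>b0 \<in> A\<close>] b0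
      unfolding m_def by (intro bexI[OF _ \<open>b0 \<in> A\<close>] midpoint_less) auto
  qed
  then have "regularized_payoff A f y m > (regularized_payoff A f y p + regularized_payoff A f y q) / 2"
    unfolding regularized_payoff_def lin by (simp add: sum.distrib field_simps flip: sum_divide_distrib)
  moreover have "regularized_payoff A f y m \<le> regularized_payoff A f y p"
    "regularized_payoff A f y m \<le> regularized_payoff A f y q"
    using p q ms by (auto simp: is_regularized_choice_def)
  ultimately show False by simp
qed

lemma is_regularized_choice_The:
  assumes "finite A" "A \<noteq> {}"
  shows "is_regularized_choice A f y (THE p. is_regularized_choice A f y p)"
proof -
  obtain p where p: "is_regularized_choice A f y p" using regularized_choice_exists[OF assms] ..
  then have "\<exists>!p. is_regularized_choice A f y p"
    using regularized_choice_unique[OF assms(1)] by blast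
  then show ?thesis by (rule theI')
qed

lemma regularized_choice_exchange:
  assumes A: "finite A" and p: "is_regularized_choice A f y p"
    and \<beta>: "\<beta> \<in> A" and \<gamma>: "\<gamma> \<in> A" and "\<beta> \<noteq> \<gamma>" and s: "0 < s" "s < p \<beta>"
  shows "y \<gamma> - y \<beta> \<le> f' (p \<gamma> + s) - f' (p \<beta> - s)"
proof -
  \<comment> \<open>Shifting mass s from \<beta> to \<gamma> cannot increase the regularized payoff; the tangent
    inequalities at the shifted points turn this into the claimed first-order bound.\<close>
  have ps: "p \<in> mixed_simplex A" using p by (simp add: is_regularized_choice_def)
  have "0 \<le> sum p (A - {\<beta>, \<gamma>})" using ps by (intro sum_nonneg) (auto simp: mixed_simplex_def)
  then have "p \<beta> + p \<gamma> \<le> 1"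
    using ps sum_split_pair[OF A \<beta> \<gamma> \<open>\<beta> \<noteq> \<gamma>\<close>, of p] by (simp add: mixed_simplex_def)
  moreover have "0 \<le> p \<gamma>" using mixed_simplex_bounds[OF ps A \<gamma>] by simp
  ultimately have in01: "p \<gamma> + s \<in> {0<..<1}" "p \<beta> - s \<in> {0<..<1}" "p \<gamma> \<in> {0..1}" "p \<beta> \<in> {0..1}"
    using s by auto
  define p' where "p' = p(\<beta> := p \<beta> - s, \<gamma> := p \<gamma> + s)"
  have split: "sum (\<lambda>b. g (p' b) b) A = g (p \<beta> - s) \<beta> + g (p \<gamma> + s) \<gamma> + sum (\<lambda>b. g (p b) b) (A - {\<beta>, \<gamma>})"
    for g :: "real \<Rightarrow> 'a \<Rightarrow> real"
  proof -
    have "sum (\<lambda>b. g (p' b) b) (A - {\<beta>, \<gamma>}) = sum (\<lambda>b. g (p b) b) (A - {\<beta>, \<gamma>})"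
      by (intro sum.cong) (auto simp: p'_def)
    then show ?thesis
      using sum_split_pair[OF A \<beta> \<gamma> \<open>\<beta> \<noteq> \<gamma>\<close>, of "\<lambda>b. g (p' b) b"] \<open>\<beta> \<noteq> \<gamma>\<close>
      by (simp add: p'_def)
  qed
  have split_p: "sum (\<lambda>b. g (p b) b) A = g (p \<beta>) \<beta> + g (p \<gamma>) \<gamma> + sum (\<lambda>b. g (p b) b) (A - {\<beta>, \<gamma>})"
    for g :: "real \<Rightarrow> 'a \<Rightarrow> real"
    using sum_split_pair[OF A \<beta> \<gamma> \<open>\<beta> \<noteq> \<gamma>\<close>] .
  have "p' \<in> mixed_simplex A"
    using ps in01 split[of "\<lambda>r _. r"] split_p[of "\<lambda>r _. r"] \<beta> \<gamma>
    by (auto simp: mixed_simplex_def p'_def)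
  then have "regularized_payoff A f y p' \<le> regularized_payoff A f y p"
    using p by (simp add: is_regularized_choice_def)
  then have "s * (y \<gamma> - y \<beta>) \<le> (f (p \<gamma> + s) - f (p \<gamma>)) + (f (p \<beta> - s) - f (p \<beta>))"
    unfolding regularized_payoff_def
    using split[of "\<lambda>r b. y b * r"] split_p[of "\<lambda>r b. y b * r"] split[of "\<lambda>r _. f r"] split_p[of "\<lambda>r _. f r"]
    by (simp add: algebra_simps)
  moreover have "f' (p \<gamma> + s) * (p \<gamma> - (p \<gamma> + s)) \<le> f (p \<gamma>) - f (p \<gamma> + s)"
    "f' (p \<beta> - s) * (p \<beta> - (p \<beta> - s)) \<le> f (p \<beta>) - f (p \<beta> - s)"
    using in01 by (blast intro: above_tangent)+
  ultimately have "s * (y \<gamma> - y \<beta>) \<le> s * (f' (p \<gamma> + s) - f' (p \<beta> - s))"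
    by (simp add: algebra_simps)
  then show ?thesis using s by simp
qed

lemma regularized_choice_mono:
  assumes A: "finite A" and p: "is_regularized_choice A f y p" and q: "is_regularized_choice A f y' q"
    and \<alpha>: "\<alpha> \<in> A" and "0 < p \<alpha>" and gaps: "\<forall>\<mu>\<in>A - {\<alpha>}. y' \<mu> - y' \<alpha> \<le> y \<mu> - y \<alpha>"
  shows "p \<alpha> \<le> q \<alpha>"
proof (rule ccontr)
  \<comment> \<open>Otherwise some \<mu> gains mass from y to y'; exchanging a small amount of mass between \<alpha>
    and \<mu> in both maximisers contradicts the strict monotonicity of f'.\<close>
  assume "\<not> p \<alpha> \<le> q \<alpha>"
  have ps: "p \<in> mixed_simplex A" and qs: "q \<in> mixed_simplex A"
    using p q by (auto simp: is_regularized_choice_def)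
  have "sum p (A - {\<alpha>}) < sum q (A - {\<alpha>})"
    using ps qs A \<alpha> \<open>\<not> p \<alpha> \<le> q \<alpha>\<close> by (simp add: mixed_simplex_def sum.remove)
  then obtain \<mu> where \<mu>: "\<mu> \<in> A - {\<alpha>}" "p \<mu> < q \<mu>"
    by (meson not_le sum_mono)
  have nonneg: "0 \<le> q \<alpha>" "0 \<le> p \<mu>" and le1: "p \<alpha> \<le> 1" "q \<mu> \<le> 1"
    using mixed_simplex_bounds[OF ps A] mixed_simplex_bounds[OF qs A] \<alpha> \<mu> by auto
  define s where "s = min (p \<alpha> - q \<alpha>) (q \<mu> - p \<mu>) / 3"
  have s: "0 < s" "2 * s < p \<alpha> - q \<alpha>" "2 * s < q \<mu> - p \<mu>"
    using \<open>\<not> p \<alpha> \<le> q \<alpha>\<close> \<mu> unfolding s_def by (auto simp: min_def)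
  have "y' \<alpha> - y' \<mu> \<le> f' (q \<alpha> + s) - f' (q \<mu> - s)"
    using \<mu> \<alpha> s nonneg by (intro regularized_choice_exchange[OF A q]) auto
  moreover have "y \<mu> - y \<alpha> \<le> f' (p \<mu> + s) - f' (p \<alpha> - s)"
    using \<mu> \<alpha> s nonneg by (intro regularized_choice_exchange[OF A p]) auto
  moreover have "f' (q \<alpha> + s) < f' (p \<alpha> - s)" "f' (p \<mu> + s) < f' (q \<mu> - s)"
    using s nonneg le1 by (auto intro!: deriv_strict_mono)
  moreover have "y' \<mu> - y' \<alpha> \<le> y \<mu> - y \<alpha>" using gaps \<mu> by blast
  ultimately show False by linarith
qed

lemma regularized_choice_le_phi:
  assumes A: "finite A" and q: "is_regularized_choice A f y q" and \<alpha>: "\<alpha> \<in> A"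
    and \<mu>: "\<mu> \<in> A - {\<alpha>}" and "0 < q \<alpha>" and z: "y \<mu> - y \<alpha> + f' 1 \<le> z"
  shows "q \<mu> \<le> phi f' z"
proof (cases "q \<mu> = 0")
  case True
  then show ?thesis using phi_nonneg by simp
next
  case False
  have qs: "q \<in> mixed_simplex A" using q by (simp add: is_regularized_choice_def)
  have "q \<mu> \<le> 1 - q \<alpha>" by (rule mixed_simplex_le_one_minus[OF qs A \<alpha> \<mu>])
  moreover have "0 \<le> q \<mu>" using mixed_simplex_bounds[OF qs A] \<mu> by simp
  ultimately have q\<mu>: "q \<mu> \<in> {0<..<1}" using False \<open>0 < q \<alpha>\<close> by simp
  show ?thesis
  proof (rule le_phi[OF q\<mu>])
    fix r assume r: "r \<in> {0<..<q \<mu>}"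
    have "y \<alpha> - y \<mu> \<le> f' (q \<alpha> + (q \<mu> - r)) - f' (q \<mu> - (q \<mu> - r))"
      using r \<mu> \<alpha> by (intro regularized_choice_exchange[OF A q]) auto
    moreover have "f' (q \<alpha> + (q \<mu> - r)) \<le> f' 1"
      using r \<open>0 < q \<alpha>\<close> \<open>q \<mu> \<le> 1 - q \<alpha>\<close> by (intro deriv_mono) auto
    ultimately show "f' r \<le> z" using z by simp
  qed
qed

lemma regularized_choice_near_pure:
  assumes A: "finite A" and p: "is_regularized_choice A f y p" and q: "is_regularized_choice A f y' q"
    and \<alpha>: "\<alpha> \<in> A" and "1 - p \<alpha> < \<eta>" "\<eta> \<le> 1"
    and gaps: "\<forall>\<mu>\<in>A - {\<alpha>}. y' \<mu> - y' \<alpha> \<le> y \<mu> - y \<alpha>"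
    and b: "b \<in> A"
  shows "\<bar>q b - pure \<alpha> b\<bar> \<le> \<eta>"
proof -
  have qs: "q \<in> mixed_simplex A" using q by (simp add: is_regularized_choice_def)
  have "p \<alpha> \<le> q \<alpha>"
    using assms by (intro regularized_choice_mono[OF A p q \<alpha> _ gaps]) simp
  moreover have "q \<alpha> \<le> 1" "0 \<le> q b" using mixed_simplex_bounds[OF qs A] \<alpha> b by auto
  moreover have "q b \<le> 1 - q \<alpha>" if "b \<noteq> \<alpha>"
    using that b by (intro mixed_simplex_le_one_minus[OF qs A \<alpha>]) simp
  ultimately show ?thesis using \<open>1 - p \<alpha> < \<eta>\<close> by (cases "b = \<alpha>") (auto simp: pure_def)
qed

lemma one_minus_regularized_choice_le_sum_phi:
  assumes A: "finite A" and q: "is_regularized_choice A f y q" and \<alpha>: "\<alpha> \<in> A" and "0 < q \<alpha>"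
    and z: "\<And>\<mu>. \<mu> \<in> A - {\<alpha>} \<Longrightarrow> y \<mu> - y \<alpha> + f' 1 \<le> z \<mu>"
  shows "1 - q \<alpha> \<le> (\<Sum>\<mu>\<in>A - {\<alpha>}. phi f' (z \<mu>))"
proof -
  have "1 - q \<alpha> = sum q (A - {\<alpha>})"
    using q A \<alpha> by (simp add: is_regularized_choice_def mixed_simplex_def sum.remove)
  also have "\<dots> \<le> (\<Sum>\<mu>\<in>A - {\<alpha>}. phi f' (z \<mu>))"
    using assms by (intro sum_mono regularized_choice_le_phi) auto
  finally show ?thesis .
qed

lemma regularized_choice_eventually_pure:
  assumes A: "finite A" and q: "\<And>t. t \<ge> 0 \<Longrightarrow> is_regularized_choice A f (y t) (q t)" and \<alpha>: "\<alpha> \<in> A"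
    and "dlim0 f' \<noteq> -\<infinity>" and r: "\<And>\<mu>. \<mu> \<in> A - {\<alpha>} \<Longrightarrow> 0 < r \<mu>"
    and pos: "\<And>t. t \<ge> 0 \<Longrightarrow> 0 < q t \<alpha>"
    and scores: "\<And>t \<mu>. t \<ge> 0 \<Longrightarrow> \<mu> \<in> A - {\<alpha>} \<Longrightarrow> y t \<mu> - y t \<alpha> + f' 1 \<le> c \<mu> - r \<mu> * t"
  shows "\<exists>T\<ge>0. \<forall>t\<ge>T. q t = pure \<alpha>"
proof -
  have "eventually (\<lambda>t. \<forall>\<mu>\<in>A - {\<alpha>}. phi f' (c \<mu> - r \<mu> * t) = 0) at_top"
    using A assms(4) r by (intro eventually_ball_finite ballI phi_eventually_zero) auto
  then obtain T where T: "\<And>t. t \<ge> T \<Longrightarrow> \<forall>\<mu>\<in>A - {\<alpha>}. phi f' (c \<mu> - r \<mu> * t) = 0"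
    by (auto simp: eventually_at_top_linorder)
  have "q t = pure \<alpha>" if "max 0 T \<le> t" for t
  proof -
    have "1 - q t \<alpha> \<le> (\<Sum>\<mu>\<in>A - {\<alpha>}. phi f' (c \<mu> - r \<mu> * t))"
      using that by (intro one_minus_regularized_choice_le_sum_phi[OF A q \<alpha> pos scores]) auto
    also have "\<dots> = 0" using T that by simp
    finally show ?thesis
      using q[of t] that A \<alpha> by (intro mixed_simplex_eq_pure) (auto simp: is_regularized_choice_def)
  qed
  then show ?thesis by (intro exI[of _ "max 0 T"]) auto
qed

end

section \<open>A first-exit argument\<close>

lemma eventually_less_at_right_of_neg_deriv:
  assumes "(g has_real_derivative d) (at T within {0..})" "0 \<le> T" "d < 0"
  shows "eventually (\<lambda>s. g s < g T) (at_right T)"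
proof -
  have "((\<lambda>s. (g s - g T) / (s - T)) \<longlongrightarrow> d) (at T within {0..})"
    using assms(1) by (simp add: has_field_derivative_iff)
  moreover have "at_right T \<le> at T within {0..}" using assms(2) by (intro at_le) auto
  ultimately have "((\<lambda>s. (g s - g T) / (s - T)) \<longlongrightarrow> d) (at_right T)"
    by (rule tendsto_mono[rotated])
  then have "eventually (\<lambda>s. (g s - g T) / (s - T) < 0) (at_right T)"
    using assms(3) by (rule order_tendstoD)
  moreover have "eventually (\<lambda>s. T < s) (at_right T)" by (simp add: eventually_at_right_less)
  ultimately show ?thesis by eventually_elim (simp add: divide_less_0_iff)
qed

lemma nonpos_at_left_limit:
  fixes g :: "real \<Rightarrow> real"
  assumes "continuous (at T within {0..}) g" "0 < T" "\<And>s. 0 \<le> s \<Longrightarrow> s < T \<Longrightarrow> g s \<le> 0"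
  shows "g T \<le> 0"
proof -
  have "(g \<longlongrightarrow> g T) (at T within {0..T})"
    using assms(1) by (auto simp: continuous_within intro: tendsto_within_subset)
  then have "(g \<longlongrightarrow> g T) (at_left T)" using assms(2) at_within_Icc_at_left[of 0 T] by simp
  moreover have "eventually (\<lambda>s. s \<in> {0<..<T}) (at_left T)"
    using assms(2) by (intro eventually_at_left_real) simp
  then have "eventually (\<lambda>s. g s \<le> 0) (at_left T)"
    by eventually_elim (auto intro: assms(3))
  ultimately show ?thesis by (rule tendsto_upperbound) simp
qed

lemma nonpos_invariant:
  fixes F F' :: "real \<Rightarrow> 'i \<Rightarrow> real"
  assumes I: "finite I"
    and deriv: "\<And>t i. t \<ge> 0 \<Longrightarrow> i \<in> I \<Longrightarrow> ((\<lambda>s. F s i) has_real_derivative F' t i) (at t within {0..})"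
    and init: "\<And>i. i \<in> I \<Longrightarrow> F 0 i \<le> 0"
    and decreasing: "\<And>t. t \<ge> 0 \<Longrightarrow> \<forall>i\<in>I. F t i \<le> 0 \<Longrightarrow> \<forall>i\<in>I. F' t i < 0"
  shows "\<forall>t\<ge>0. \<forall>i\<in>I. F t i \<le> 0"
proof (rule ccontr)
  \<comment> \<open>At the infimum T of the violation times all F i are still nonpositive, so they all
    decrease strictly just after T, and no violation can occur arbitrarily close to T.\<close>
  define S where "S = {t. t \<ge> 0 \<and> (\<exists>i\<in>I. F t i > 0)}"
  assume "\<not> (\<forall>t\<ge>0. \<forall>i\<in>I. F t i \<le> 0)"
  then obtain t0 i0 where "t0 \<ge> 0" "i0 \<in> I" "F t0 i0 > 0" by (auto simp: not_le)
  then have "S \<noteq> {}" by (auto simp: S_def)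
  have "bdd_below S" by (auto simp: S_def bdd_below_def)
  define T where "T = Inf S"
  have "T \<ge> 0" unfolding T_def using \<open>S \<noteq> {}\<close> by (rule cInf_greatest) (simp add: S_def)
  have T_le: "T \<le> t" if "t \<in> S" for t
    unfolding T_def using that \<open>bdd_below S\<close> by (rule cInf_lower)
  have at_T: "\<forall>i\<in>I. F T i \<le> 0"
  proof (cases "T = 0")
    case False
    show ?thesis
    proof
      fix i assume "i \<in> I"
      show "F T i \<le> 0"
      proof (rule nonpos_at_left_limit[where g = "\<lambda>s. F s i"])
        show "continuous (at T within {0..}) (\<lambda>s. F s i)"
          using deriv[OF \<open>T \<ge> 0\<close> \<open>i \<in> I\<close>] by (rule DERIV_continuous)
        show "F s i \<le> 0" if "0 \<le> s" "s < T" for s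
        proof (rule ccontr)
          assume "\<not> F s i \<le> 0"
          then have "s \<in> S" using that \<open>i \<in> I\<close> unfolding S_def by (auto simp: not_le)
          then show False using T_le[of s] that by simp
        qed
      qed (use False \<open>T \<ge> 0\<close> in auto)
    qed
  qed (use init in auto)
  have "eventually (\<lambda>s. \<forall>i\<in>I. F s i < F T i) (at_right T)"
    using I decreasing[OF \<open>T \<ge> 0\<close> at_T] \<open>T \<ge> 0\<close>
    by (intro eventually_ball_finite ballI eventually_less_at_right_of_neg_deriv) (auto intro: deriv)
  then obtain b where "T < b" and b: "\<And>s. T < s \<Longrightarrow> s < b \<Longrightarrow> \<forall>i\<in>I. F s i < F T i"
    by (auto simp: eventually_at_right_field)
  have "b \<le> T" unfolding T_def
  proof (rule cInf_greatest[OF \<open>S \<noteq> {}\<close>])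
    fix t assume "t \<in> S"
    then obtain i where i: "i \<in> I" "F t i > 0" by (auto simp: S_def)
    show "b \<le> t"
    proof (rule ccontr)
      assume "\<not> b \<le> t"
      moreover have "T \<noteq> t" using at_T i by auto
      ultimately have "F t i < F T i" using b[of t] T_le[OF \<open>t \<in> S\<close>] i(1) by simp
      then show False using at_T i by fastforce
    qed
  qed
  then show False using \<open>T < b\<close> by simp
qed

section \<open>Payoffs near a strict equilibrium\<close>

lemma strategies_bounds:
  assumes "x \<in> strategies A" "finite (A j)" "b \<in> A j"
  shows "0 \<le> x j b" "x j b \<le> 1"
  using mixed_simplex_bounds[of "x j" "A j" b] assms by (auto simp: strategies_def)

lemma abs_payv_diff_le:
  fixes A :: "'n::finite \<Rightarrow> 'a set" and \<eta> :: real
  assumes x: "x \<in> strategies A" and x': "x' \<in> strategies A" and fin: "\<And>j. finite (A j)"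
    and close: "\<forall>j. \<forall>b\<in>A j. \<bar>x j b - x' j b\<bar> \<le> \<eta>" and "0 \<le> \<eta>"
  shows "\<bar>payv A U k x \<beta> - payv A U k x' \<beta>\<bar> \<le> (\<Sum>a\<in>Pi\<^sub>E UNIV A. \<bar>U k a\<bar>) * (CARD('n) * \<eta>)"
proof -
  let ?X = "x(k := pure \<beta>)" and ?X' = "x'(k := pure \<beta>)"
  have prod_close: "\<bar>(\<Prod>j\<in>UNIV. ?X j (a j)) - (\<Prod>j\<in>UNIV. ?X' j (a j))\<bar> \<le> CARD('n) * \<eta>"
    if "a \<in> Pi\<^sub>E UNIV A" for a
  proof -
    have a: "a j \<in> A j" for j using that by (auto simp: PiE_iff)
    have "\<bar>(\<Prod>j\<in>UNIV. ?X j (a j)) - (\<Prod>j\<in>UNIV. ?X' j (a j))\<bar> \<le> (\<Sum>j\<in>UNIV. \<bar>?X j (a j) - ?X' j (a j)\<bar>)"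
      using strategies_bounds[OF x fin a] strategies_bounds[OF x' fin a]
      by (intro norm_prod_diff[where 'a=real, unfolded real_norm_def]) (auto simp: pure_def)
    also have "\<dots> \<le> (\<Sum>j\<in>(UNIV::'n set). \<eta>)"
      using close a \<open>0 \<le> \<eta>\<close> by (intro sum_mono) auto
    finally show ?thesis by simp
  qed
  have "payv A U k x \<beta> - payv A U k x' \<beta> =
      (\<Sum>a\<in>Pi\<^sub>E UNIV A. ((\<Prod>j\<in>UNIV. ?X j (a j)) - (\<Prod>j\<in>UNIV. ?X' j (a j))) * U k a)"
    by (simp add: payv_def payoff_def algebra_simps flip: sum_subtractf)
  also have "\<bar>\<dots>\<bar> \<le> (\<Sum>a\<in>Pi\<^sub>E UNIV A. \<bar>((\<Prod>j\<in>UNIV. ?X j (a j)) - (\<Prod>j\<in>UNIV. ?X' j (a j))) * U k a\<bar>)"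
    by (rule sum_abs)
  also have "\<dots> \<le> (\<Sum>a\<in>Pi\<^sub>E UNIV A. (CARD('n) * \<eta>) * \<bar>U k a\<bar>)"
    using prod_close by (intro sum_mono) (auto simp: abs_mult intro: mult_right_mono)
  finally show ?thesis by (simp add: sum_distrib_left sum_distrib_right mult.commute)
qed

lemma strict_nash_payv_gap:
  assumes "strict_nash A U xs" "xs k = pure \<alpha>" "finite (A k)" "\<mu> \<in> A k - {\<alpha>}"
  shows "payv A U k xs \<mu> < payv A U k xs \<alpha>"
proof -
  have "pure \<mu> \<in> mixed_simplex (A k)" using assms(3,4) by (intro pure_in_mixed_simplex) auto
  moreover have "pure \<mu> \<noteq> xs k" using assms(2,4) by (auto simp: pure_def fun_eq_iff)
  ultimately have "payoff A U k (xs(k := pure \<mu>)) < payoff A U k xs"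
    using assms(1) by (auto simp: strict_nash_def)
  moreover have "xs(k := pure \<alpha>) = xs" using assms(2) by auto
  ultimately show ?thesis by (simp add: payv_def)
qed

lemma payv_gap_persists:
  fixes A :: "'n::finite \<Rightarrow> 'a set"
  assumes fin: "\<And>j. finite (A j)" and xs: "xs \<in> strategies A"
    and gap: "\<And>k \<mu>. \<mu> \<in> A k - {\<alpha>s k} \<Longrightarrow> payv A U k xs \<mu> < payv A U k xs (\<alpha>s k)"
    and "0 < \<epsilon>"
  shows "\<exists>\<eta>>0. \<forall>x\<in>strategies A. (\<forall>j. \<forall>b\<in>A j. \<bar>x j b - xs j b\<bar> \<le> \<eta>) \<longrightarrow>
    (\<forall>k. \<forall>\<mu>\<in>A k - {\<alpha>s k}. payv A U k x \<mu> - payv A U k x (\<alpha>s k)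
       + (1 - \<epsilon>) * (payv A U k xs (\<alpha>s k) - payv A U k xs \<mu>) < 0)"
proof -
  \<comment> \<open>Choose \<eta> so that every payoff moves by at most a quarter of \<epsilon> times the smallest gap
    (the extra 1 keeps the minimum defined when no player has a second action).\<close>
  define \<delta> where "\<delta> k \<mu> = payv A U k xs (\<alpha>s k) - payv A U k xs \<mu>" for k \<mu>
  define P where "P = Sigma UNIV (\<lambda>k. A k - {\<alpha>s k})"
  define \<delta>min where "\<delta>min = Min (insert 1 ((\<lambda>(k, \<mu>). \<delta> k \<mu>) ` P))"
  have "finite P" unfolding P_def using fin by (intro finite_SigmaI) auto
  then have "0 < \<delta>min" using gap by (auto simp: \<delta>min_def P_def \<delta>_def)
  have \<delta>min_le: "\<delta>min \<le> \<delta> k \<mu>" if "\<mu> \<in> A k - {\<alpha>s k}" for k \<mu>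
    using \<open>finite P\<close> that unfolding \<delta>min_def P_def by (intro Min_le) force+
  define M where "M = (\<Sum>k\<in>UNIV. \<Sum>a\<in>Pi\<^sub>E UNIV A. \<bar>U k a\<bar>) + 1"
  have M_ge: "(\<Sum>a\<in>Pi\<^sub>E UNIV A. \<bar>U k a\<bar>) \<le> M - 1" for k
  proof -
    have "(\<Sum>a\<in>Pi\<^sub>E UNIV A. \<bar>U k a\<bar>) \<le> (\<Sum>k\<in>UNIV. \<Sum>a\<in>Pi\<^sub>E UNIV A. \<bar>U k a\<bar>)"
      by (rule member_le_sum) (auto intro: sum_nonneg)
    then show ?thesis by (simp add: M_def)
  qed
  have "1 \<le> M" unfolding M_def by (simp add: sum_nonneg)
  define \<eta> where "\<eta> = \<epsilon> * \<delta>min / (4 * CARD('n) * M)"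
  have "0 < \<eta>" using \<open>0 < \<epsilon>\<close> \<open>0 < \<delta>min\<close> \<open>1 \<le> M\<close> by (simp add: \<eta>_def)
  have "\<forall>k. \<forall>\<mu>\<in>A k - {\<alpha>s k}. payv A U k x \<mu> - payv A U k x (\<alpha>s k) + (1 - \<epsilon>) * \<delta> k \<mu> < 0"
    if x: "x \<in> strategies A" and close: "\<forall>j. \<forall>b\<in>A j. \<bar>x j b - xs j b\<bar> \<le> \<eta>" for x
  proof (intro allI ballI)
    fix k \<mu> assume \<mu>: "\<mu> \<in> A k - {\<alpha>s k}"
    have moved: "\<bar>payv A U k x \<beta> - payv A U k xs \<beta>\<bar> \<le> \<epsilon> * \<delta>min / 4" for \<beta>
    proof -
      have "\<bar>payv A U k x \<beta> - payv A U k xs \<beta>\<bar> \<le> (\<Sum>a\<in>Pi\<^sub>E UNIV A. \<bar>U k a\<bar>) * (CARD('n) * \<eta>)"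
        using \<open>0 < \<eta>\<close> by (intro abs_payv_diff_le[OF x xs fin close]) simp
      also have "\<dots> \<le> M * (CARD('n) * \<eta>)"
        using M_ge[of k] \<open>0 < \<eta>\<close> by (intro mult_right_mono) auto
      also have "\<dots> = \<epsilon> * \<delta>min / 4" using \<open>1 \<le> M\<close> by (simp add: \<eta>_def)
      finally show ?thesis .
    qed
    have "\<epsilon> * \<delta>min \<le> \<epsilon> * \<delta> k \<mu>" using \<open>0 < \<epsilon>\<close> \<delta>min_le[OF \<mu>] by simp
    moreover have "0 < \<epsilon> * \<delta>min" using \<open>0 < \<epsilon>\<close> \<open>0 < \<delta>min\<close> by simp
    moreover have "(1 - \<epsilon>) * \<delta> k \<mu> = \<delta> k \<mu> - \<epsilon> * \<delta> k \<mu>" by (simp add: algebra_simps)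
    ultimately show "payv A U k x \<mu> - payv A U k x (\<alpha>s k) + (1 - \<epsilon>) * \<delta> k \<mu> < 0"
      using moved[of \<mu>] moved[of "\<alpha>s k"] unfolding \<delta>_def abs_le_iff by linarith
  qed
  then show ?thesis using \<open>0 < \<eta>\<close> unfolding \<delta>_def by blast
qed

lemma strict_nash_margin:
  fixes A :: "'n::finite \<Rightarrow> 'a set"
  assumes fin: "\<And>j. finite (A j)" and nash: "strict_nash A U xs" and xs: "\<And>k. xs k = pure (\<alpha>s k)"
    and "0 < \<epsilon>"
  obtains \<eta> where "0 < \<eta>" "\<eta> \<le> 1/2"
    "\<forall>x\<in>strategies A. (\<forall>j. \<forall>b\<in>A j. \<bar>x j b - pure (\<alpha>s j) b\<bar> \<le> \<eta>) \<longrightarrow>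
      (\<forall>k. \<forall>\<mu>\<in>A k - {\<alpha>s k}. payv A U k x \<mu> - payv A U k x (\<alpha>s k)
        + (1 - \<epsilon>) * (payv A U k xs (\<alpha>s k) - payv A U k xs \<mu>) < 0)"
proof -
  have "xs \<in> strategies A" using nash by (simp add: strict_nash_def)
  then obtain \<eta> where "0 < \<eta>" and margin: "\<forall>x\<in>strategies A. (\<forall>j. \<forall>b\<in>A j. \<bar>x j b - xs j b\<bar> \<le> \<eta>) \<longrightarrow>
      (\<forall>k. \<forall>\<mu>\<in>A k - {\<alpha>s k}. payv A U k x \<mu> - payv A U k x (\<alpha>s k)
        + (1 - \<epsilon>) * (payv A U k xs (\<alpha>s k) - payv A U k xs \<mu>) < 0)"
    using payv_gap_persists[OF fin _ strict_nash_payv_gap[OF nash xs fin] \<open>0 < \<epsilon>\<close>] by blast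
  show ?thesis
    by (rule that[of "min \<eta> (1/2)"]) (use \<open>0 < \<eta>\<close> margin xs in auto)
qed

section \<open>Score dynamics\<close>

locale decomposable_game =
  fixes A :: "'n::finite \<Rightarrow> 'a set" and \<theta> \<theta>' :: "'n \<Rightarrow> real \<Rightarrow> real"
    and h :: "'n \<Rightarrow> ('a \<Rightarrow> real) \<Rightarrow> real"
  assumes finite_actions: "\<And>k. finite (A k)" and nonempty_actions: "\<And>k. A k \<noteq> {}"
    and kernel: "\<And>k. kernel (\<theta> k) (\<theta>' k)"
    and decomposable: "\<And>k z. z \<in> mixed_simplex (A k) \<Longrightarrow> h k z = (\<Sum>b\<in>A k. \<theta> k (z b))"
begin

lemma choice_is_regularized: "is_regularized_choice (A k) (\<theta> k) (y k) (choice A h y k)"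
proof -
  have "(\<lambda>p. p \<in> mixed_simplex (A k) \<and> (\<forall>z\<in>mixed_simplex (A k).
      (\<Sum>b\<in>A k. y k b * z b) - h k z \<le> (\<Sum>b\<in>A k. y k b * p b) - h k p))
    = is_regularized_choice (A k) (\<theta> k) (y k)"
    by (auto simp: is_regularized_choice_def regularized_payoff_def decomposable)
  then have "choice A h y k = (THE p. is_regularized_choice (A k) (\<theta> k) (y k) p)"
    unfolding choice_def by simp
  then show ?thesis
    using kernel.is_regularized_choice_The[OF kernel finite_actions nonempty_actions] by simp
qed

lemma choice_in_strategies: "choice A h y \<in> strategies A"
  using choice_is_regularized by (simp add: strategies_def is_regularized_choice_def)

context
  fixes y :: "real \<Rightarrow> 'n \<Rightarrow> 'a \<Rightarrow> real" and \<gamma> :: "'n \<Rightarrow> real"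
    and U :: "'n \<Rightarrow> ('n \<Rightarrow> 'a) \<Rightarrow> real" and \<alpha>s :: "'n \<Rightarrow> 'a"
    and r :: "'n \<Rightarrow> 'a \<Rightarrow> real" and \<eta> :: real
  assumes ode: "\<forall>t\<ge>0. \<forall>k. \<forall>b\<in>A k.
      ((\<lambda>s. y s k b) has_real_derivative \<gamma> k * payv A U k (choice A h (y t)) b) (at t within {0..})"
    and \<gamma>_pos: "\<And>k. 0 < \<gamma> k" and \<alpha>s: "\<And>k. \<alpha>s k \<in> A k"
    and r_nonneg: "\<forall>k. \<forall>\<mu>\<in>A k - {\<alpha>s k}. 0 \<le> r k \<mu>"
    and margin: "\<forall>x\<in>strategies A. (\<forall>j. \<forall>b\<in>A j. \<bar>x j b - pure (\<alpha>s j) b\<bar> \<le> \<eta>) \<longrightarrow>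
      (\<forall>k. \<forall>\<mu>\<in>A k - {\<alpha>s k}. payv A U k x \<mu> - payv A U k x (\<alpha>s k) + r k \<mu> < 0)"
    and init: "\<forall>k. \<forall>b\<in>A k. \<bar>choice A h (y 0) k b - pure (\<alpha>s k) b\<bar> < \<eta>"
    and \<eta>_le: "\<eta> \<le> 1/2"
begin

lemma initial_weight: "1 - choice A h (y 0) k (\<alpha>s k) < \<eta>"
  using init \<alpha>s[of k] by (force simp: pure_def)

lemma score_gaps_decrease:
  assumes "t \<ge> 0" "\<mu> \<in> A k - {\<alpha>s k}"
  shows "y t k \<mu> - y t k (\<alpha>s k) \<le> y 0 k \<mu> - y 0 k (\<alpha>s k) - \<gamma> k * r k \<mu> * t"
proof -
  \<comment> \<open>While the score gaps stay below their initial values, the choice stays \<eta>-close to the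
    equilibrium by monotonicity, so the margin makes the gaps fall at rate at least \<gamma> k * r k \<mu>.\<close>
  define I where "I = Sigma UNIV (\<lambda>k. A k - {\<alpha>s k})"
  define F where "F t = (\<lambda>(k, \<mu>). y t k \<mu> - y t k (\<alpha>s k) - (y 0 k \<mu> - y 0 k (\<alpha>s k)) + \<gamma> k * r k \<mu> * t)"
    for t
  define F' where "F' t = (\<lambda>(k, \<mu>). \<gamma> k * (payv A U k (choice A h (y t)) \<mu>
      - payv A U k (choice A h (y t)) (\<alpha>s k) + r k \<mu>))" for t
  have "\<forall>t\<ge>0. \<forall>i\<in>I. F t i \<le> 0"
  proof (rule nonpos_invariant)
    show "finite I" unfolding I_def using finite_actions by (intro finite_SigmaI) auto
    show "((\<lambda>s. F s i) has_real_derivative F' t i) (at t within {0..})" if "t \<ge> 0" "i \<in> I" for t i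
    proof -
      obtain k \<mu> where i: "i = (k, \<mu>)" "\<mu> \<in> A k" using \<open>i \<in> I\<close> by (auto simp: I_def)
      have dy: "((\<lambda>s. y s k b) has_real_derivative \<gamma> k * payv A U k (choice A h (y t)) b)
          (at t within {0..})" if "b \<in> A k" for b
        using ode \<open>t \<ge> 0\<close> that by blast
      have "((\<lambda>s. y s k \<mu> - y s k (\<alpha>s k) - (y 0 k \<mu> - y 0 k (\<alpha>s k)) + \<gamma> k * r k \<mu> * s)
          has_real_derivative \<gamma> k * payv A U k (choice A h (y t)) \<mu>
            - \<gamma> k * payv A U k (choice A h (y t)) (\<alpha>s k) - 0 + \<gamma> k * r k \<mu> * 1) (at t within {0..})"
        by (intro derivative_intros dy i \<alpha>s DERIV_cmult[OF DERIV_ident])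
      then show ?thesis by (simp add: F_def F'_def i algebra_simps)
    qed
    show "F 0 i \<le> 0" for i by (simp add: F_def split: prod.split)
    show "\<forall>i\<in>I. F' t i < 0" if "t \<ge> 0" and below: "\<forall>i\<in>I. F t i \<le> 0" for t
    proof -
      have gaps: "\<forall>\<mu>\<in>A j - {\<alpha>s j}. y t j \<mu> - y t j (\<alpha>s j) \<le> y 0 j \<mu> - y 0 j (\<alpha>s j)" for j
      proof
        fix \<mu> assume \<mu>: "\<mu> \<in> A j - {\<alpha>s j}"
        then have "F t (j, \<mu>) \<le> 0" using below by (auto simp: I_def)
        moreover have "0 \<le> \<gamma> j * r j \<mu> * t" using \<gamma>_pos[of j] r_nonneg \<mu> \<open>t \<ge> 0\<close> by simp
        ultimately show "y t j \<mu> - y t j (\<alpha>s j) \<le> y 0 j \<mu> - y 0 j (\<alpha>s j)" by (simp add: F_def)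
      qed
      have "\<forall>j. \<forall>b\<in>A j. \<bar>choice A h (y t) j b - pure (\<alpha>s j) b\<bar> \<le> \<eta>"
      proof (intro allI ballI)
        fix j b assume "b \<in> A j"
        show "\<bar>choice A h (y t) j b - pure (\<alpha>s j) b\<bar> \<le> \<eta>"
          using \<eta>_le by (intro kernel.regularized_choice_near_pure[OF kernel finite_actions
              choice_is_regularized[where y = "y 0"] choice_is_regularized[where y = "y t"]
              \<alpha>s initial_weight _ gaps \<open>b \<in> A j\<close>]) simp
      qed
      then have "\<forall>k. \<forall>\<mu>\<in>A k - {\<alpha>s k}. payv A U k (choice A h (y t)) \<mu>
          - payv A U k (choice A h (y t)) (\<alpha>s k) + r k \<mu> < 0"
        by (rule margin[THEN bspec, OF choice_in_strategies, THEN mp])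
      then show ?thesis using \<gamma>_pos by (auto simp: I_def F'_def mult_pos_neg)
    qed
  qed
  then have "F t (k, \<mu>) \<le> 0" using assms by (simp add: I_def)
  then show ?thesis by (simp add: F_def)
qed

lemma equilibrium_weight_pos:
  assumes "t \<ge> 0"
  shows "0 < choice A h (y t) k (\<alpha>s k)"
proof -
  have "0 < choice A h (y 0) k (\<alpha>s k)" using initial_weight[of k] \<eta>_le by simp
  also have "\<dots> \<le> choice A h (y t) k (\<alpha>s k)"
  proof (intro kernel.regularized_choice_mono[OF kernel finite_actions
        choice_is_regularized choice_is_regularized \<alpha>s] calculation ballI)
    fix \<mu> assume \<mu>: "\<mu> \<in> A k - {\<alpha>s k}"
    have "0 \<le> \<gamma> k * r k \<mu> * t" using \<gamma>_pos[of k] r_nonneg \<mu> assms by simp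
    then show "y t k \<mu> - y t k (\<alpha>s k) \<le> y 0 k \<mu> - y 0 k (\<alpha>s k)"
      using score_gaps_decrease[OF assms \<mu>] by linarith
  qed
  finally show ?thesis .
qed

lemma deficit_le_sum_phi:
  assumes "t \<ge> 0"
    and z: "\<And>\<mu>. \<mu> \<in> A k - {\<alpha>s k} \<Longrightarrow> y 0 k \<mu> - y 0 k (\<alpha>s k) + \<theta>' k 1 - \<gamma> k * r k \<mu> * t \<le> z \<mu>"
  shows "1 - choice A h (y t) k (\<alpha>s k) \<le> (\<Sum>\<mu>\<in>A k - {\<alpha>s k}. phi (\<theta>' k) (z \<mu>))"
proof (rule kernel.one_minus_regularized_choice_le_sum_phi[OF kernel finite_actions
      choice_is_regularized \<alpha>s equilibrium_weight_pos[OF assms(1)]])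
  fix \<mu> assume "\<mu> \<in> A k - {\<alpha>s k}"
  then show "y t k \<mu> - y t k (\<alpha>s k) + \<theta>' k 1 \<le> z \<mu>"
    using score_gaps_decrease[OF assms(1)] z[of \<mu>] by fastforce
qed

lemma eventually_equilibrium:
  assumes "\<And>\<mu>. \<mu> \<in> A k - {\<alpha>s k} \<Longrightarrow> 0 < r k \<mu>" and "dlim0 (\<theta>' k) \<noteq> -\<infinity>"
  shows "\<exists>T\<ge>0. \<forall>t\<ge>T. choice A h (y t) k = pure (\<alpha>s k)"
proof (rule kernel.regularized_choice_eventually_pure[where c = "\<lambda>\<mu>. y 0 k \<mu> - y 0 k (\<alpha>s k) + \<theta>' k 1",
      OF kernel finite_actions choice_is_regularized \<alpha>s assms(2)])
  show "0 < \<gamma> k * r k \<mu>" if "\<mu> \<in> A k - {\<alpha>s k}" for \<mu>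
    using \<gamma>_pos[of k] assms(1)[OF that] by simp
  show "y t k \<mu> - y t k (\<alpha>s k) + \<theta>' k 1 \<le> y 0 k \<mu> - y 0 k (\<alpha>s k) + \<theta>' k 1 - \<gamma> k * r k \<mu> * t"
    if "t \<ge> 0" "\<mu> \<in> A k - {\<alpha>s k}" for t \<mu>
    using score_gaps_decrease[OF that] by simp
qed (rule equilibrium_weight_pos)

end

end

theorem proposition5p3:
  fixes A :: "'n::finite \<Rightarrow> 'a set"
    and U :: "'n \<Rightarrow> ('n \<Rightarrow> 'a) \<Rightarrow> real"
    and \<theta> \<theta>' :: "'n \<Rightarrow> real \<Rightarrow> real"
    and h :: "'n \<Rightarrow> ('a \<Rightarrow> real) \<Rightarrow> real"
    and \<gamma> :: "'n \<Rightarrow> real"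
    and xs :: "'n \<Rightarrow> 'a \<Rightarrow> real"
    and \<alpha>s :: "'n \<Rightarrow> 'a"
  assumes A_fin: "\<And>k. finite (A k)" and A_ne: "\<And>k. A k \<noteq> {}"
    and \<theta>_cont: "\<And>k. continuous_on {0..1} (\<theta> k)"
    and \<theta>_sc: "\<And>k. strongly_convex_on_real {0<..1} (\<theta> k)"
    and \<theta>_deriv: "\<And>k s. s \<in> {0<..1} \<Longrightarrow> (\<theta> k has_real_derivative \<theta>' k s) (at s within {0<..1})"
    and \<theta>'_cont: "\<And>k. continuous_on {0<..1} (\<theta>' k)"
    and h_dec: "\<And>k z. z \<in> mixed_simplex (A k) \<Longrightarrow> h k z = (\<Sum>b\<in>A k. \<theta> k (z b))"
    and \<gamma>_pos: "\<And>k. \<gamma> k > 0"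
    and nash: "strict_nash A U xs"
    and xs_pure: "\<And>k. \<alpha>s k \<in> A k \<and> xs k = pure (\<alpha>s k)"
  shows "\<forall>\<epsilon>>0. \<exists>\<eta>>0. \<exists>c :: ('n \<Rightarrow> 'a \<Rightarrow> real) \<Rightarrow> 'n \<Rightarrow> 'a \<Rightarrow> real.
     \<forall>y :: real \<Rightarrow> 'n \<Rightarrow> 'a \<Rightarrow> real.
       (\<forall>t\<ge>0. \<forall>k. \<forall>b\<in>A k. ((\<lambda>s. y s k b) has_real_derivative
              \<gamma> k * payv A U k (choice A h (y t)) b) (at t within {0..}))
       \<and> (\<forall>k. \<forall>b\<in>A k. \<bar>choice A h (y 0) k b - xs k b\<bar> < \<eta>)
       \<longrightarrow>
       (\<forall>t\<ge>0. \<forall>k. 1 - choice A h (y t) k (\<alpha>s k) \<le>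
          (\<Sum>\<mu>\<in>A k - {\<alpha>s k}. phi (\<theta>' k)
              (c (y 0) k \<mu> - (1 - \<epsilon>) * \<gamma> k *
                 (payv A U k xs (\<alpha>s k) - payv A U k xs \<mu>) * t)))
       \<and> (\<forall>k. dlim0 (\<theta>' k) \<noteq> -\<infinity> \<longrightarrow>
            (\<exists>T\<ge>0. \<forall>t\<ge>T. choice A h (y t) k = xs k))"
proof (intro allI impI, goal_cases)
  case (1 \<epsilon>)
  interpret decomposable_game A \<theta> \<theta>' h
    by unfold_locales (auto intro: kernel.intro \<theta>_cont \<theta>_sc \<theta>_deriv \<theta>'_cont A_fin h_dec simp: A_ne)
  have \<alpha>s: "\<alpha>s k \<in> A k" and xs_k: "xs k = pure (\<alpha>s k)" for k using xs_pure by auto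
  \<comment> \<open>Capping \<epsilon> keeps the decay rate (1 - \<epsilon>') * \<gamma> k * \<delta> k \<mu> positive, which the
    finite-time claim needs; the rate (1 - \<epsilon>) of the estimate is then weaker.\<close>
  define \<epsilon>' where "\<epsilon>' = min \<epsilon> (1/2)"
  define \<delta> where "\<delta> k \<mu> = payv A U k xs (\<alpha>s k) - payv A U k xs \<mu>" for k \<mu>
  have \<delta>: "0 < \<delta> k \<mu>" if "\<mu> \<in> A k - {\<alpha>s k}" for k \<mu>
    using strict_nash_payv_gap[OF nash xs_k A_fin that] by (simp add: \<delta>_def)
  obtain \<eta> where "0 < \<eta>" "\<eta> \<le> 1/2" and margin:
    "\<forall>x\<in>strategies A. (\<forall>j. \<forall>b\<in>A j. \<bar>x j b - pure (\<alpha>s j) b\<bar> \<le> \<eta>) \<longrightarrow>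
      (\<forall>k. \<forall>\<mu>\<in>A k - {\<alpha>s k}. payv A U k x \<mu> - payv A U k x (\<alpha>s k) + (1 - \<epsilon>') * \<delta> k \<mu> < 0)"
    using strict_nash_margin[OF A_fin nash xs_k, of \<epsilon>'] 1 unfolding \<delta>_def \<epsilon>'_def by auto
  have r: "\<forall>k. \<forall>\<mu>\<in>A k - {\<alpha>s k}. 0 \<le> (1 - \<epsilon>') * \<delta> k \<mu>"
    using \<delta> by (auto simp: \<epsilon>'_def intro: less_imp_le)
  define c where "c y0 k \<mu> = y0 k \<mu> - y0 k (\<alpha>s k) + \<theta>' k 1" for y0 :: "'n \<Rightarrow> 'a \<Rightarrow> real" and k \<mu>
  show ?case
  proof (rule exI[of _ \<eta>], intro conjI exI[of _ c] allI impI, goal_cases)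
    case (2 y t k)
    then have "\<forall>k. \<forall>b\<in>A k. \<bar>choice A h (y 0) k b - pure (\<alpha>s k) b\<bar> < \<eta>" using xs_k by simp
    note dynamics = conjunct1[OF 2(1)] \<gamma>_pos \<alpha>s r margin this \<open>\<eta> \<le> 1/2\<close>
    show ?case unfolding \<delta>_def[symmetric]
    proof (rule deficit_le_sum_phi[OF dynamics \<open>t \<ge> 0\<close>])
      fix \<mu> assume "\<mu> \<in> A k - {\<alpha>s k}"
      then have "0 \<le> \<gamma> k * \<delta> k \<mu> * t" using \<gamma>_pos[of k] \<delta> \<open>t \<ge> 0\<close> by (simp add: less_imp_le)
      then have "(1 - \<epsilon>) * (\<gamma> k * \<delta> k \<mu> * t) \<le> (1 - \<epsilon>') * (\<gamma> k * \<delta> k \<mu> * t)"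
        by (intro mult_right_mono) (simp_all add: \<epsilon>'_def)
      then show "y 0 k \<mu> - y 0 k (\<alpha>s k) + \<theta>' k 1 - \<gamma> k * ((1 - \<epsilon>') * \<delta> k \<mu>) * t
          \<le> c (y 0) k \<mu> - (1 - \<epsilon>) * \<gamma> k * \<delta> k \<mu> * t"
        by (simp add: c_def algebra_simps)
    qed
  next
    case (3 y k)
    then have "\<forall>k. \<forall>b\<in>A k. \<bar>choice A h (y 0) k b - pure (\<alpha>s k) b\<bar> < \<eta>" using xs_k by simp
    note dynamics = conjunct1[OF 3(1)] \<gamma>_pos \<alpha>s r margin this \<open>\<eta> \<le> 1/2\<close>
    have "\<exists>T\<ge>0. \<forall>t\<ge>T. choice A h (y t) k = pure (\<alpha>s k)"
      using \<delta> 3(2) by (intro eventually_equilibrium[OF dynamics]) (simp add: \<epsilon>'_def)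
    then show ?case using xs_k by simp
  qed (use \<open>0 < \<eta>\<close> in simp)
qed

end
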